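(* Let $(X,\mathtt{d})$ be a finite metric space with $X=\bigsqcup_{i=1}^sX_i$, and consider $k$-center clustering with $z$ outliers on $X$ with optimal radius $r_{\mathtt{opt}}$ and an optimal outlier set $O=\bigsqcup_{i=1}^sO_i$ with $O_i\subseteq X_i$ and $z_i^*=|O_i|$. Then $2r_{\mathtt{opt}}\geq\max_{1\leq i\leq s}r_{\mathtt{opt}}(X_i,k,z_i^* )$.
   Context: For a finite metric set $Y$ of size $N$ and integer $0\leq w<N$, $r_{\mathtt{opt}}(Y,k,w)$ denotes the optimal value of $k$-center clustering with $w$ outliers on $Y$: the minimum over $Y'\subseteq Y$ with $|Y'|\geq N-w$ and centers $c_1,\dots,c_k\in Y$ of $\max_{p\in Y'}\min_j\mathtt{d}(p,c_j)$. $r_{\mathtt{opt}}=r_{\mathtt{opt}}(X,k,z)$, and $O$ is the set of $z$ points excluded by a fixed optimal solution on $X$. *)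

theory Defs
  imports "HOL-Analysis.Analysis"
begin

definition kc_cost :: "'a::metric_space set \<Rightarrow> nat \<Rightarrow> (nat \<Rightarrow> 'a) \<Rightarrow> real" where
  "kc_cost Y' k c = Max (insert 0 ((\<lambda>p. Min ((\<lambda>j. dist p (c j)) ` {..<k})) ` Y'))"

definition r_opt :: "'a::metric_space set \<Rightarrow> nat \<Rightarrow> nat \<Rightarrow> real" where
  "r_opt Y k w = Min {kc_cost Y' k c | Y' c.
      Y' \<subseteq> Y \<and> card Y' \<ge> card Y - w \<and> c ` {..<k} \<subseteq> Y}"

end

theory Submission
  imports Defs
begin

text \<open>If centers c serve the unremoved points X - Out within radius r, then every part P of X
  (keeping the outliers Out \<inter> P) can be served within 2r by centers taken inside P: replace each
  center c j by a point of P - Out at distance at most r from it, when there is one. By the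
  triangle inequality a point of P - Out served by c j is then within 2r of its substitute.\<close>

lemma kc_cost_restrict_centers: "kc_cost Y' k c = kc_cost Y' k (restrict c {..<k})"
  unfolding kc_cost_def
  by (intro arg_cong[where f=Max] arg_cong[where f="insert 0"] image_cong refl) auto

lemma finite_kc_costs:
  assumes "finite Y"
  shows "finite {kc_cost Y' k c | Y' c. Y' \<subseteq> Y \<and> card Y' \<ge> card Y - w \<and> c ` {..<k} \<subseteq> Y}"
proof -
  have "{kc_cost Y' k c | Y' c. Y' \<subseteq> Y \<and> card Y' \<ge> card Y - w \<and> c ` {..<k} \<subseteq> Y}
        \<subseteq> (\<lambda>(Y', f). kc_cost Y' k f) ` (Pow Y \<times> PiE {..<k} (\<lambda>_. Y))"
  proof
    fix x assume "x \<in> {kc_cost Y' k c | Y' c. Y' \<subseteq> Y \<and> card Y' \<ge> card Y - w \<and> c ` {..<k} \<subseteq> Y}"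
    then obtain Y' c where x: "x = kc_cost Y' k c" "Y' \<subseteq> Y" "c ` {..<k} \<subseteq> Y" by blast
    then have "(Y', restrict c {..<k}) \<in> Pow Y \<times> PiE {..<k} (\<lambda>_. Y)" by auto
    then show "x \<in> (\<lambda>(Y', f). kc_cost Y' k f) ` (Pow Y \<times> PiE {..<k} (\<lambda>_. Y))"
      using x(1) kc_cost_restrict_centers by (intro image_eqI[where x="(Y', restrict c {..<k})"]) auto
  qed
  moreover have "finite (Pow Y \<times> PiE {..<k} (\<lambda>_. Y))"
    using assms by (intro finite_cartesian_product finite_PiE) auto
  ultimately show ?thesis by (rule finite_subset[OF _ finite_imageI])
qed

lemma r_opt_le_kc_cost:
  assumes "finite Y" "Y' \<subseteq> Y" "card Y' \<ge> card Y - w" "c ` {..<k} \<subseteq> Y"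
  shows "r_opt Y k w \<le> kc_cost Y' k c"
  unfolding r_opt_def using assms by (intro Min_le finite_kc_costs) blast+

lemma kc_cost_nonneg:
  assumes "finite Y'"
  shows "0 \<le> kc_cost Y' k c"
  unfolding kc_cost_def using assms by (intro Max_ge) auto

lemma kc_cost_covers:
  assumes "finite Y'" "p \<in> Y'" "k \<ge> 1"
  obtains j where "j < k" "dist p (c j) \<le> kc_cost Y' k c"
proof -
  have "(\<lambda>j. dist p (c j)) ` {..<k} \<noteq> {}" using assms(3) by (auto simp: lessThan_empty_iff)
  then have "Min ((\<lambda>j. dist p (c j)) ` {..<k}) \<in> (\<lambda>j. dist p (c j)) ` {..<k}"
    by (intro Min_in) auto
  then obtain j where j: "j < k" "Min ((\<lambda>j. dist p (c j)) ` {..<k}) = dist p (c j)"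
    by auto
  have "Min ((\<lambda>j. dist p (c j)) ` {..<k}) \<le> kc_cost Y' k c"
    unfolding kc_cost_def using assms by (intro Max_ge) auto
  with j that show thesis by simp
qed

lemma kc_cost_le:
  assumes "finite Y'" "r \<ge> 0" "\<And>p. p \<in> Y' \<Longrightarrow> \<exists>j<k. dist p (c j) \<le> r"
  shows "kc_cost Y' k c \<le> r"
proof -
  have "Min ((\<lambda>j. dist p (c j)) ` {..<k}) \<le> r" if "p \<in> Y'" for p
    using assms(3)[OF that] by (auto intro: Min_le_iff[THEN iffD2])
  then show ?thesis
    unfolding kc_cost_def using assms(1,2) by (auto simp: Max_le_iff)
qed

lemma kc_cost_recenter:
  assumes "finite Y'" "k \<ge> 1" "A \<subseteq> Y'" "A \<subseteq> B" "B \<noteq> {}"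
  obtains c' where "c' ` {..<k} \<subseteq> B" "kc_cost A k c' \<le> 2 * kc_cost Y' k c"
proof -
  define r where "r = kc_cost Y' k c"
  have "\<exists>q. q \<in> B \<and> ((\<exists>p\<in>A. dist p (c j) \<le> r) \<longrightarrow> dist q (c j) \<le> r)" for j
    using assms(4,5) by blast
  then obtain c' where c': "\<And>j. c' j \<in> B" "\<And>j p. p \<in> A \<Longrightarrow> dist p (c j) \<le> r \<Longrightarrow> dist (c' j) (c j) \<le> r"
    by metis
  have "\<exists>j<k. dist p (c' j) \<le> 2 * r" if p: "p \<in> A" for p
  proof -
    obtain j where j: "j < k" "dist p (c j) \<le> r"
      using kc_cost_covers[of Y' p k c] assms(1-3) p r_def by auto
    have "dist p (c' j) \<le> dist p (c j) + dist (c' j) (c j)"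
      using dist_triangle[of p "c' j" "c j"] by (simp add: dist_commute)
    also have "\<dots> \<le> 2 * r" using c'(2)[OF p j(2)] j(2) by simp
    finally show ?thesis using j(1) by blast
  qed
  moreover have "finite A" using assms(1,3) finite_subset by blast
  moreover have "r \<ge> 0" using kc_cost_nonneg[OF assms(1)] r_def by simp
  ultimately have "kc_cost A k c' \<le> 2 * r" by (intro kc_cost_le) auto
  with c'(1) that r_def show thesis by blast
qed

lemma r_opt_part_le:
  assumes "finite X" "k \<ge> 1" "P \<subseteq> X" "P \<noteq> {}"
  shows "r_opt P k (card (Out \<inter> P)) \<le> 2 * kc_cost (X - Out) k c"
proof -
  have "finite P" using assms(1,3) finite_subset by blast
  obtain c' where c': "c' ` {..<k} \<subseteq> P" "kc_cost (P - Out) k c' \<le> 2 * kc_cost (X - Out) k c"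
    using kc_cost_recenter[of "X - Out" k "P - Out" P c] assms by blast
  have "card (P - Out) \<ge> card P - card (Out \<inter> P)"
    using card_Diff_subset_Int[of P Out] \<open>finite P\<close> by (simp add: Int_commute)
  then have "r_opt P k (card (Out \<inter> P)) \<le> kc_cost (P - Out) k c'"
    using \<open>finite P\<close> c'(1) by (intro r_opt_le_kc_cost) auto
  with c'(2) show ?thesis by linarith
qed

theorem lemma18:
  fixes X :: "'a::metric_space set" and Xs :: "nat \<Rightarrow> 'a set"
    and s k z :: nat and Out :: "'a set"
  assumes "finite X"
    and "k \<ge> 1" and "z < card X"
    and "s \<ge> 1"
    and "X = (\<Union>i\<in>{1..s}. Xs i)"
    and "\<And>i j. i \<in> {1..s} \<Longrightarrow> j \<in> {1..s} \<Longrightarrow> i \<noteq> j \<Longrightarrow> Xs i \<inter> Xs j = {}"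
    and "\<And>i. i \<in> {1..s} \<Longrightarrow> Xs i \<noteq> {}"
    and "Out \<subseteq> X" and "card Out = z"
    and "\<exists>c. c ` {..<k} \<subseteq> X \<and> kc_cost (X - Out) k c = r_opt X k z"
  shows "2 * r_opt X k z \<ge> Max ((\<lambda>i. r_opt (Xs i) k (card (Out \<inter> Xs i))) ` {1..s})"
proof -
  obtain c where c: "kc_cost (X - Out) k c = r_opt X k z" using assms(10) by blast
  have "r_opt (Xs i) k (card (Out \<inter> Xs i)) \<le> 2 * r_opt X k z" if "i \<in> {1..s}" for i
  proof -
    have "Xs i \<subseteq> X" using assms(5) that by blast
    then show ?thesis using r_opt_part_le[of X k "Xs i" Out c] assms(1,2,7) that c by simp
  qed
  then show ?thesis using assms(4) by (subst Max_le_iff) auto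
qed

end
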